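(* For every integer $r$ there exists an integer $k=k(r)$ such that the following holds. If $G$ is a graph whose neighborhood complexity satisfies $\eta_G(m)\le r\cdot m$ for every positive integer $m$, then the vertices of $G$ can be (not necessarily properly) colored with $k$ colors such that for every non-isolated vertex $v$ of $G$ there exists a color which appears on an odd number of vertices of the open neighborhood $N(v)$.
   Context: All graphs are finite and simple. $N(v)$ denotes the open neighborhood of $v$ (not containing $v$). The neighborhood complexity of a graph $G$ is the function $\eta_G(m)=\max_{A}|\{N(v)\cap A : v\in V(G)\}|$, where the maximum is over all $m$-element subsets $A\subseteq V(G)$. *)

theory Defs
  imports Main
begin

definition simple_graph :: "'a set \<Rightarrow> ('a \<Rightarrow> 'a \<Rightarrow> bool) \<Rightarrow> bool" where
  "simple_graph V E \<longleftrightarrow> finite V \<and> (\<forall>u v. E u v \<longrightarrow> E v u)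
     \<and> (\<forall>v. \<not> E v v) \<and> (\<forall>u v. E u v \<longrightarrow> u \<in> V \<and> v \<in> V)"

definition nbhd :: "'a set \<Rightarrow> ('a \<Rightarrow> 'a \<Rightarrow> bool) \<Rightarrow> 'a \<Rightarrow> 'a set" where
  "nbhd V E v = {u \<in> V. E v u}"

text \<open>Neighbourhood complexity: maximum over m-element subsets A of V of the
number of distinct traces N(v) \<inter> A, v \<in> V (0 if there is no such A).\<close>
definition nbhd_complexity :: "'a set \<Rightarrow> ('a \<Rightarrow> 'a \<Rightarrow> bool) \<Rightarrow> nat \<Rightarrow> nat" where
  "nbhd_complexity V E m =
     Sup {card ((\<lambda>v. nbhd V E v \<inter> A) ` V) | A. A \<subseteq> V \<and> card A = m}"

end

theory Submission
  imports Defs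
begin

(*
  Write N(v) for neighbourhoods. The hypothesis says that every vertex set A carries at most
  r |A| distinct traces N(v) \<inter> A, i.e. the dual set system has linear shatter function.

  Colours are t-bit numbers, and the colouring is built by peeling. Let Z be the uncoloured
  vertices and U the vertices that still need an odd colour class inside Z. We find a set
  W \<subseteq> Z of one or two vertices such that every v \<in> U with N(v) \<inter> Z \<subseteq> W sees W an odd
  number of times, while the vertices seeing W an odd number of times have at most
  K(r) distinct traces on Z - W. Colour Z - W recursively (for those v seeing W evenly), and
  give W one colour whose bit vector differs from the parity vector of each of these K(r) <
  2^t traces: then every v \<in> U has a bit j such that an odd number of its neighbours in Z
  have bit j set. Summing over the colours with bit j set yields an odd colour class.

  To find W when U has more than K(r) traces on Z, take representatives U' of the distinct
  traces and R \<subseteq> Z of the distinct traces of Z on U' (so |U'| \<le> r |R|). Join x, y \<in> R when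
  {x, y} is the entire trace of some v \<in> U; every A \<subseteq> R spans at most r |A| such edges,
  so R contains an independent set I with |R| \<le> (2r + 1) |I|. Haussler's packing argument,
  applied to the sets N(x) \<inter> U' for x \<in> I, gives x \<noteq> y in I whose neighbourhoods differ on
  few vertices of U', and W = {x, y} works.
*)

section \<open>Shattering and the one-inclusion graph\<close>

definition shatters :: "'a set set \<Rightarrow> 'a set \<Rightarrow> bool" where
  "shatters H B \<longleftrightarrow> Pow B \<subseteq> (\<lambda>T. T \<inter> B) ` H"

definition one_inclusion_edges :: "'a set set \<Rightarrow> ('a set \<times> 'a) set" where
  "one_inclusion_edges H = {(T, p). T \<in> H \<and> p \<notin> T \<and> insert p T \<in> H}"

definition twins :: "'a \<Rightarrow> 'a set set \<Rightarrow> 'a set set" where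
  "twins a H = {T \<in> H. a \<notin> T \<and> insert a T \<in> H}"

lemma finite_one_inclusion_edges:
  assumes "finite A" "H \<subseteq> Pow A"
  shows "finite (one_inclusion_edges H)"
proof (rule finite_subset)
  show "one_inclusion_edges H \<subseteq> Pow A \<times> A"
    using assms(2) by (auto simp: one_inclusion_edges_def)
qed (use assms(1) in simp)

lemma shatters_image_Diff_iff:
  assumes "a \<notin> B"
  shows "shatters ((\<lambda>T. T - {a}) ` H) B \<longleftrightarrow> shatters H B"
proof -
  have "(\<lambda>T. T \<inter> B) ` (\<lambda>T. T - {a}) ` H = (\<lambda>T. T \<inter> B) ` H"
    using assms by (auto simp: image_image intro!: image_cong)
  then show ?thesis by (simp add: shatters_def)
qed

lemma shatters_insert_if_shatters_twins:
  assumes "shatters (twins a H) B"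
  shows "shatters H (insert a B)"
  unfolding shatters_def
proof
  fix C assume C: "C \<in> Pow (insert a B)"
  then have "C - {a} \<in> Pow B"
    by blast
  then have "C - {a} \<in> (\<lambda>T. T \<inter> B) ` twins a H"
    using assms unfolding shatters_def by (rule subsetD[rotated])
  then obtain T where T: "T \<in> H" "a \<notin> T" "insert a T \<in> H" "C - {a} = T \<inter> B"
    by (auto simp: twins_def)
  show "C \<in> (\<lambda>T. T \<inter> insert a B) ` H"
  proof (cases "a \<in> C")
    case True
    then have "C = insert a T \<inter> insert a B" using T(4) C by auto
    then show ?thesis using T(3) by blast
  next
    case False
    then have "C = T \<inter> insert a B" using T(2,4) by auto
    then show ?thesis using T(1) by blast
  qed
qed

lemma card_image_Diff_add_card_twins:
  assumes "finite H"
  shows "card ((\<lambda>T. T - {a}) ` H) + card (twins a H) = card H"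
proof -
  define Hin Hout where "Hin = {T \<in> H. a \<in> T}" and "Hout = {T \<in> H. a \<notin> T}"
  have fin: "finite Hout" "finite Hin"
    using assms by (simp_all add: Hin_def Hout_def)
  have H_split: "H = Hout \<union> Hin" "Hout \<inter> Hin = {}"
    unfolding Hin_def Hout_def by auto
  have "(\<lambda>T. T - {a}) ` Hout = Hout"
    unfolding Hout_def by (auto intro: image_eqI)
  then have image_split: "(\<lambda>T. T - {a}) ` H = Hout \<union> (\<lambda>T. T - {a}) ` Hin"
    by (subst H_split(1)) (simp only: image_Un)
  have twins: "twins a H = Hout \<inter> (\<lambda>T. T - {a}) ` Hin"
  proof (intro equalityI subsetI)
    fix S assume "S \<in> Hout \<inter> (\<lambda>T. T - {a}) ` Hin"
    then obtain T where "S \<in> H" "a \<notin> S" "T \<in> H" "a \<in> T" "S = T - {a}"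
      unfolding Hin_def Hout_def by blast
    then show "S \<in> twins a H" by (simp add: twins_def insert_absorb)
  next
    fix S assume "S \<in> twins a H"
    then show "S \<in> Hout \<inter> (\<lambda>T. T - {a}) ` Hin"
      unfolding Hin_def Hout_def twins_def by (auto intro!: image_eqI[where x = "insert a S"])
  qed
  have "inj_on (\<lambda>T. T - {a}) Hin"
    unfolding Hin_def by (rule inj_onI) (metis (mono_tags) insert_Diff mem_Collect_eq)
  then have "card ((\<lambda>T. T - {a}) ` Hin) = card Hin"
    by (rule card_image)
  moreover have "card Hout + card Hin = card H"
    using fin H_split by (simp add: card_Un_disjoint)
  moreover have "card (Hout \<union> (\<lambda>T. T - {a}) ` Hin) + card (Hout \<inter> (\<lambda>T. T - {a}) ` Hin)
      = card Hout + card ((\<lambda>T. T - {a}) ` Hin)"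
    using fin card_Un_Int by (metis finite_imageI)
  ultimately show ?thesis
    unfolding image_split twins by linarith
qed

lemma one_inclusion_edges_image_Diff:
  assumes "(T, p) \<in> one_inclusion_edges H" "p \<noteq> a"
  shows "(T - {a}, p) \<in> one_inclusion_edges ((\<lambda>T. T - {a}) ` H)"
proof -
  have "insert p (T - {a}) = insert p T - {a}"
    using assms(2) by blast
  then show ?thesis
    using assms(1) by (auto simp: one_inclusion_edges_def)
qed

lemma card_one_inclusion_edges_at_le:
  assumes "finite (twins a H)"
  shows "card {e \<in> one_inclusion_edges H. snd e = a} \<le> card (twins a H)"
proof -
  have "{e \<in> one_inclusion_edges H. snd e = a} \<subseteq> (\<lambda>T. (T, a)) ` twins a H"
  proof
    fix e assume "e \<in> {e \<in> one_inclusion_edges H. snd e = a}"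
    then obtain T where "e = (T, a)" "T \<in> twins a H"
      by (cases e) (simp add: twins_def one_inclusion_edges_def)
    then show "e \<in> (\<lambda>T. (T, a)) ` twins a H" by simp
  qed
  then show ?thesis
    using assms by (meson card_image_le card_mono finite_imageI le_trans)
qed

lemma one_inclusion_edges_twins:
  assumes "(S, p) \<in> one_inclusion_edges H" "(insert a S, p) \<in> one_inclusion_edges H" "a \<notin> S" "p \<noteq> a"
  shows "(S, p) \<in> one_inclusion_edges (twins a H)"
  using assms by (auto simp: one_inclusion_edges_def twins_def insert_commute)

lemma card_one_inclusion_edges_off_le:
  assumes "finite A" "H \<subseteq> Pow A"
  shows "card {e \<in> one_inclusion_edges H. snd e \<noteq> a}
    \<le> card (one_inclusion_edges ((\<lambda>T. T - {a}) ` H)) + card (one_inclusion_edges (twins a H))"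
proof -
  let ?E = one_inclusion_edges and ?H' = "(\<lambda>T. T - {a}) ` H"
  define Eout Ein where "Eout = {(T, p) \<in> ?E H. p \<noteq> a \<and> a \<notin> T}"
    and "Ein = {(T, p) \<in> ?E H. p \<noteq> a \<and> a \<in> T}"
  define drop_a where "drop_a = (\<lambda>(T, p). (T - {a}, p :: 'a))"
  have "?H' \<subseteq> Pow A" "twins a H \<subseteq> Pow A"
    using assms(2) by (auto simp: twins_def)
  then have fin_E: "finite (?E H)" "finite (?E ?H')" "finite (?E (twins a H))"
    using assms by (simp_all add: finite_one_inclusion_edges)
  have "inj_on drop_a Ein"
    by (rule inj_onI) (auto simp: drop_a_def Ein_def)
  then have card_Ein: "card (drop_a ` Ein) = card Ein"
    by (rule card_image)
  have "Eout \<subseteq> ?E ?H'"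
  proof
    fix e assume "e \<in> Eout"
    then obtain T p where "e = (T, p)" "(T, p) \<in> ?E H" "p \<noteq> a" "T - {a} = T"
      by (auto simp: Eout_def)
    then show "e \<in> ?E ?H'"
      using one_inclusion_edges_image_Diff[of T p H a] by simp
  qed
  moreover have "drop_a ` Ein \<subseteq> ?E ?H'"
    using one_inclusion_edges_image_Diff[of _ _ H a] by (auto simp: Ein_def drop_a_def)
  moreover have "Eout \<inter> drop_a ` Ein \<subseteq> ?E (twins a H)"
    using one_inclusion_edges_twins[of _ _ H a] by (auto simp: Eout_def Ein_def drop_a_def insert_absorb)
  ultimately have "card Eout + card (drop_a ` Ein) \<le> card (?E ?H') + card (?E (twins a H))"
    using fin_E card_Un_Int[of Eout "drop_a ` Ein"]
    by (metis Un_least add_le_mono card_mono finite_Int finite_Un infinite_super)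
  moreover have "{e \<in> ?E H. snd e \<noteq> a} = Eout \<union> Ein" "Eout \<inter> Ein = {}"
    by (auto simp: Eout_def Ein_def)
  moreover have "Eout \<subseteq> ?E H" "Ein \<subseteq> ?E H"
    by (auto simp: Eout_def Ein_def)
  then have "finite Eout" "finite Ein"
    using fin_E(1) by (simp_all add: finite_subset)
  ultimately show ?thesis
    using card_Ein by (simp add: card_Un_disjoint)
qed

lemma card_one_inclusion_edges_split:
  assumes "finite A" "H \<subseteq> Pow A"
  shows "card (one_inclusion_edges H)
    \<le> card (twins a H) + card (one_inclusion_edges ((\<lambda>T. T - {a}) ` H)) + card (one_inclusion_edges (twins a H))"
proof -
  let ?E = one_inclusion_edges
  have "?E H = {e \<in> ?E H. snd e = a} \<union> {e \<in> ?E H. snd e \<noteq> a}"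
    by blast
  then have "card (?E H) \<le> card {e \<in> ?E H. snd e = a} + card {e \<in> ?E H. snd e \<noteq> a}"
    using card_Un_le[of "{e \<in> ?E H. snd e = a}" "{e \<in> ?E H. snd e \<noteq> a}"] by simp
  moreover have "finite (twins a H)"
    using assms finite_subset[of H "Pow A"] by (simp add: twins_def)
  ultimately show ?thesis
    using card_one_inclusion_edges_at_le[of a H] card_one_inclusion_edges_off_le[OF assms, of a]
    by linarith
qed

lemma shatters_empty_iff: "shatters H {} \<longleftrightarrow> H \<noteq> {}"
  by (auto simp: shatters_def)

lemma shattered_card_le_image_Diff:
  assumes "a \<notin> A" "\<forall>B\<subseteq>insert a A. shatters H B \<longrightarrow> card B \<le> d"
    and "B \<subseteq> A" "shatters ((\<lambda>T. T - {a}) ` H) B"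
  shows "card B \<le> d"
proof -
  have "shatters H B"
    using assms(1,3,4) shatters_image_Diff_iff[of a B H] by blast
  then show ?thesis
    using assms(2,3) by (meson subset_insertI2)
qed

lemma shattered_card_less_twins:
  assumes "finite A" "a \<notin> A" "\<forall>B\<subseteq>insert a A. shatters H B \<longrightarrow> card B \<le> d"
    and "B \<subseteq> A" "shatters (twins a H) B"
  shows "card B < d"
proof -
  have "shatters H (insert a B)"
    using assms(5) by (rule shatters_insert_if_shatters_twins)
  moreover have "insert a B \<subseteq> insert a A"
    using assms(4) by blast
  ultimately have "card (insert a B) \<le> d"
    using assms(3) by blast
  moreover have "finite B" "a \<notin> B"
    using assms(1,2,4) finite_subset by auto
  ultimately show ?thesis by simp
qed

theorem card_one_inclusion_edges_le:
  assumes "finite A" "H \<subseteq> Pow A" "\<forall>B\<subseteq>A. shatters H B \<longrightarrow> card B \<le> d"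
  shows "card (one_inclusion_edges H) \<le> d * card H"
  using assms
proof (induction A arbitrary: H d rule: finite_induct)
  case empty
  then have "one_inclusion_edges H = {}"
    by (auto simp: one_inclusion_edges_def)
  then show ?case by simp
next
  case (insert a A H d)
  let ?H' = "(\<lambda>T. T - {a}) ` H" and ?E = one_inclusion_edges
  have H'_sub: "?H' \<subseteq> Pow A" and twins_sub: "twins a H \<subseteq> Pow A"
    using insert.prems(1) by (auto simp: twins_def)
  have twins_less: "card B < d" if "B \<subseteq> A" "shatters (twins a H) B" for B
    using shattered_card_less_twins[OF insert.hyps insert.prems(2) that] .
  have "\<forall>B\<subseteq>A. shatters ?H' B \<longrightarrow> card B \<le> d"
    using shattered_card_le_image_Diff[OF insert.hyps(2) insert.prems(2)] by blast
  then have IH': "card (?E ?H') \<le> d * card ?H'"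
    by (rule insert.IH[OF H'_sub])
  have "\<forall>B\<subseteq>A. shatters (twins a H) B \<longrightarrow> card B \<le> d - 1"
    by (intro allI impI, drule (1) twins_less, linarith)
  then have "card (?E (twins a H)) \<le> (d - 1) * card (twins a H)"
    by (rule insert.IH[OF twins_sub])
  moreover have "card (?E H) \<le> card (twins a H) + card (?E ?H') + card (?E (twins a H))"
    using insert.hyps(1) insert.prems(1) by (intro card_one_inclusion_edges_split) simp_all
  ultimately have "card (?E H) \<le> card (twins a H) + d * card ?H' + (d - 1) * card (twins a H)"
    using IH' by linarith
  also have "\<dots> \<le> d * (card ?H' + card (twins a H))"
  proof (cases "twins a H = {}")
    case False
    then have "0 < d"
      using twins_less[of "{}"] by (simp add: shatters_empty_iff)
    then show ?thesis
      by (cases d) (simp_all add: algebra_simps)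
  qed simp
  also have "\<dots> = d * card H"
    using insert.hyps(1) insert.prems(1) finite_subset[of H "Pow (insert a A)"]
    by (simp add: card_image_Diff_add_card_twins)
  finally show ?case .
qed

section \<open>Packing in set systems with linear shatter function\<close>

definition traces :: "('a \<Rightarrow> 'b set) \<Rightarrow> 'a set \<Rightarrow> 'b set \<Rightarrow> 'b set set" where
  "traces D I A = (\<lambda>x. D x \<inter> A) ` I"

definition linear_shatter :: "('a \<Rightarrow> 'b set) \<Rightarrow> 'a set \<Rightarrow> 'b set \<Rightarrow> nat \<Rightarrow> bool" where
  "linear_shatter D I P r \<longleftrightarrow> (\<forall>A\<subseteq>P. A \<noteq> {} \<longrightarrow> card (traces D I A) \<le> r * card A)"

definition separated :: "('a \<Rightarrow> 'b set) \<Rightarrow> 'a set \<Rightarrow> 'b set \<Rightarrow> nat \<Rightarrow> bool" where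
  "separated D I P \<delta> \<longleftrightarrow> (\<forall>x\<in>I. \<forall>y\<in>I. x \<noteq> y \<longrightarrow> \<delta> \<le> card (sym_diff (D x) (D y) \<inter> P))"

lemma card_traces_empty_le:
  fixes D :: "'a \<Rightarrow> 'b set"
  shows "card (traces D U {}) \<le> 1"
proof -
  have "traces D U {} \<subseteq> {{}}"
    by (auto simp: traces_def)
  then have "card (traces D U {}) \<le> card {{} :: 'b set}"
    by (rule card_mono[rotated]) simp
  then show ?thesis by simp
qed

lemma card_traces_mono:
  assumes "finite U" "U' \<subseteq> U"
  shows "card (traces D U' Z) \<le> card (traces D U Z)"
  using assms by (auto simp: traces_def intro: card_mono)

lemma card_traces_Diff_le:
  assumes "finite U"
  shows "card (traces D U (Z - W)) \<le> card (traces D U Z)"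
proof -
  have "traces D U (Z - W) = (\<lambda>T. T - W) ` traces D U Z"
    by (auto simp: traces_def image_image Int_Diff)
  then show ?thesis
    using assms by (simp add: card_image_le traces_def)
qed

lemma card_traces_le:
  assumes "linear_shatter D I P r" "A \<subseteq> P"
  shows "card (traces D I A) \<le> r * card A + 1"
proof (cases "A = {}")
  case True
  then show ?thesis
    using card_traces_empty_le[of D I] by simp
next
  case False
  then show ?thesis
    using assms by (simp add: linear_shatter_def le_SucI)
qed

lemma linear_shatter_mono:
  assumes "linear_shatter D I P r" "finite I" "I' \<subseteq> I" "P' \<subseteq> P"
  shows "linear_shatter D I' P' r"
  unfolding linear_shatter_def
proof (intro allI impI)
  fix A assume "A \<subseteq> P'" "A \<noteq> {}"
  then have "card (traces D I A) \<le> r * card A"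
    using assms(1,4) by (simp add: linear_shatter_def)
  then show "card (traces D I' A) \<le> r * card A"
    using card_traces_mono[OF assms(2,3)] le_trans by blast
qed

lemma mult_Suc_less_power_two: "n * Suc n < 2 ^ Suc n"
proof (induction n)
  case (Suc n)
  have "Suc n \<le> 2 ^ n"
    by (rule Suc_leI[OF less_exp])
  with Suc.IH show ?case by simp
qed simp

lemma mult_less_power_two:
  assumes "r < n"
  shows "r * n < 2 ^ n"
  using assms
proof (induction n)
  case (Suc n)
  show ?case
  proof (cases "r < n")
    case True
    then have "r \<le> 2 ^ n"
      using less_exp[of n] by linarith
    with Suc.IH[OF True] show ?thesis by simp
  next
    case False
    with Suc.prems have "r = n" by simp
    then show ?thesis using mult_Suc_less_power_two[of n] by simp
  qed
qed simp

lemma card_le_if_traces_shattered: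
  assumes "finite I" "linear_shatter D I P r" "B \<subseteq> P" "Pow B \<subseteq> traces D I B"
  shows "card B \<le> r"
proof (rule ccontr)
  assume "\<not> card B \<le> r"
  then have "B \<noteq> {}" by auto
  have "finite (traces D I B)"
    using assms(1) by (simp add: traces_def)
  then have "finite B" "card (Pow B) \<le> card (traces D I B)"
    using assms(4) by (metis finite_Pow_iff finite_subset, simp add: card_mono)
  then have "2 ^ card B \<le> card (traces D I B)"
    by (simp add: card_Pow)
  also have "\<dots> \<le> r * card B"
    using assms(2,3) \<open>B \<noteq> {}\<close> by (simp add: linear_shatter_def)
  finally show False
    using mult_less_power_two[of r "card B"] \<open>\<not> card B \<le> r\<close> by simp
qed

lemma card_eq_sum_of_bool:
  assumes "finite A"
  shows "card {x \<in> A. P x} = (\<Sum>x\<in>A. of_bool (P x))"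
  using assms by (simp add: Int_def)

lemma sum_card_Diff_Int_eq:
  assumes "finite K" "finite Q"
  shows "(\<Sum>x\<in>K. \<Sum>y\<in>K. card ((f x - f y) \<inter> Q))
    = (\<Sum>p\<in>Q. card {x \<in> K. p \<in> f x} * card {y \<in> K. p \<notin> f y})"
proof -
  have "card ((f x - f y) \<inter> Q) = (\<Sum>p\<in>Q. of_bool (p \<in> f x) * of_bool (p \<notin> f y))" for x y
  proof -
    have "(f x - f y) \<inter> Q = {p \<in> Q. p \<in> f x \<and> p \<notin> f y}" by blast
    then show ?thesis
      by (simp only: card_eq_sum_of_bool[OF assms(2)] of_bool_conj)
  qed
  then have "(\<Sum>x\<in>K. \<Sum>y\<in>K. card ((f x - f y) \<inter> Q))
      = (\<Sum>x\<in>K. \<Sum>y\<in>K. \<Sum>p\<in>Q. of_bool (p \<in> f x) * of_bool (p \<notin> f y))"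
    by simp
  also have "\<dots> = (\<Sum>x\<in>K. \<Sum>p\<in>Q. \<Sum>y\<in>K. of_bool (p \<in> f x) * of_bool (p \<notin> f y))"
    by (rule sum.cong[OF refl], rule sum.swap)
  also have "\<dots> = (\<Sum>p\<in>Q. \<Sum>x\<in>K. \<Sum>y\<in>K. of_bool (p \<in> f x) * of_bool (p \<notin> f y))"
    by (rule sum.swap)
  also have "\<dots> = (\<Sum>p\<in>Q. (\<Sum>x\<in>K. of_bool (p \<in> f x)) * (\<Sum>y\<in>K. of_bool (p \<notin> f y)))"
    by (simp only: sum_product)
  also have "\<dots> = (\<Sum>p\<in>Q. card {x \<in> K. p \<in> f x} * card {y \<in> K. p \<notin> f y})"
    by (simp only: card_eq_sum_of_bool[OF assms(1)])
  finally show ?thesis .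
qed

lemma sum_card_sym_diff_Int_eq:
  assumes "finite K" "finite Q"
  shows "(\<Sum>x\<in>K. \<Sum>y\<in>K. card (sym_diff (f x) (f y) \<inter> Q))
    = 2 * (\<Sum>p\<in>Q. card {x \<in> K. p \<in> f x} * card {y \<in> K. p \<notin> f y})"
proof -
  have "card (sym_diff (f x) (f y) \<inter> Q) = card ((f x - f y) \<inter> Q) + card ((f y - f x) \<inter> Q)" for x y
    using assms(2) by (subst card_Un_disjoint[symmetric]) (auto intro: arg_cong[where f = card])
  then have "(\<Sum>x\<in>K. \<Sum>y\<in>K. card (sym_diff (f x) (f y) \<inter> Q))
      = (\<Sum>x\<in>K. \<Sum>y\<in>K. card ((f x - f y) \<inter> Q)) + (\<Sum>y\<in>K. \<Sum>x\<in>K. card ((f x - f y) \<inter> Q))"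
    by (simp add: sum.distrib sum.swap[of "\<lambda>x y. card ((f y - f x) \<inter> Q)"])
  also have "(\<Sum>y\<in>K. \<Sum>x\<in>K. card ((f x - f y) \<inter> Q)) = (\<Sum>x\<in>K. \<Sum>y\<in>K. card ((f x - f y) \<inter> Q))"
    by (rule sum.swap)
  finally show ?thesis
    using sum_card_Diff_Int_eq[OF assms, of f] by simp
qed

lemma mult_le_add_mult_min: "a * b \<le> (a + b) * min a (b :: nat)"
  by (cases "a \<le> b") (simp_all add: algebra_simps min_def mult_le_mono)

lemma separated_card_le_sum_min:
  assumes "finite K" "finite Q" "separated f K Q \<delta>"
  shows "(card K - 1) * \<delta> \<le> 2 * (\<Sum>p\<in>Q. min (card {x \<in> K. p \<notin> f x}) (card {x \<in> K. p \<in> f x}))"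
proof -
  define k where "k = card K"
  define inn out where "inn p = card {x \<in> K. p \<in> f x}" and "out p = card {x \<in> K. p \<notin> f x}" for p
  have "inn p + out p = k" for p
  proof -
    have "card ({x \<in> K. p \<in> f x} \<union> {x \<in> K. p \<notin> f x}) = inn p + out p"
      unfolding inn_def out_def using assms(1) by (intro card_Un_disjoint) auto
    moreover have "{x \<in> K. p \<in> f x} \<union> {x \<in> K. p \<notin> f x} = K" by blast
    ultimately show ?thesis by (simp add: k_def)
  qed
  then have inn_out: "inn p * out p \<le> k * min (out p) (inn p)" for p
    using mult_le_add_mult_min[of "out p" "inn p"] by (simp add: mult.commute add.commute)
  have "(k - 1) * \<delta> \<le> (\<Sum>y\<in>K. card (sym_diff (f x) (f y) \<inter> Q))" if "x \<in> K" for x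
  proof -
    have "(k - 1) * \<delta> = (\<Sum>y\<in>K - {x}. \<delta>)"
      using that assms(1) by (simp add: k_def)
    also have "\<dots> \<le> (\<Sum>y\<in>K - {x}. card (sym_diff (f x) (f y) \<inter> Q))"
      using assms(3) that by (intro sum_mono) (auto simp: separated_def)
    also have "\<dots> \<le> (\<Sum>y\<in>K. card (sym_diff (f x) (f y) \<inter> Q))"
      using assms(1) by (intro sum_mono2) auto
    finally show ?thesis .
  qed
  then have "k * ((k - 1) * \<delta>) \<le> (\<Sum>x\<in>K. \<Sum>y\<in>K. card (sym_diff (f x) (f y) \<inter> Q))"
    using sum_mono[of K "\<lambda>_. (k - 1) * \<delta>"] by (simp add: k_def)
  also have "\<dots> = 2 * (\<Sum>p\<in>Q. inn p * out p)"
    using sum_card_sym_diff_Int_eq[OF assms(1,2), of f] by (simp add: inn_def out_def)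
  also have "\<dots> \<le> k * (2 * (\<Sum>p\<in>Q. min (out p) (inn p)))"
    using inn_out by (simp add: sum_distrib_left sum_mono mult.left_commute)
  finally have "k * ((k - 1) * \<delta>) \<le> k * (2 * (\<Sum>p\<in>Q. min (out p) (inn p)))" .
  then show ?thesis
    by (cases "k = 0") (simp_all add: k_def inn_def out_def)
qed

definition trace_mult :: "('a \<Rightarrow> 'b set) \<Rightarrow> 'a set \<Rightarrow> 'b set \<Rightarrow> 'b set \<Rightarrow> nat" where
  "trace_mult D I A T = card {x \<in> I. D x \<inter> A = T}"

definition edge_weight :: "('a \<Rightarrow> 'b set) \<Rightarrow> 'a set \<Rightarrow> 'b set \<Rightarrow> 'b set \<times> 'b \<Rightarrow> nat" where
  "edge_weight D I A e = min (trace_mult D I A (fst e)) (trace_mult D I A (insert (snd e) (fst e)))"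

lemma sum_eq_sum_card_levels:
  fixes f :: "'a \<Rightarrow> nat"
  assumes "finite S" "\<forall>s\<in>S. f s \<le> M"
  shows "(\<Sum>s\<in>S. f s) = (\<Sum>l\<in>{1..M}. card {s \<in> S. l \<le> f s})"
proof -
  have "f s = (\<Sum>l\<in>{1..M}. of_bool (l \<le> f s))" if "s \<in> S" for s
  proof -
    have "{l \<in> {1..M}. l \<le> f s} = {1..f s}"
      using assms(2) that by auto
    then show ?thesis
      by (simp only: card_eq_sum_of_bool[symmetric, OF finite_atLeastAtMost]) simp
  qed
  then have "(\<Sum>s\<in>S. f s) = (\<Sum>s\<in>S. \<Sum>l\<in>{1..M}. of_bool (l \<le> f s))"
    by (rule sum.cong[OF refl])
  also have "\<dots> = (\<Sum>l\<in>{1..M}. card {s \<in> S. l \<le> f s})"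
    by (subst sum.swap) (simp only: card_eq_sum_of_bool[OF assms(1)])
  finally show ?thesis .
qed

lemma trace_mult_le: "finite I \<Longrightarrow> trace_mult D I A T \<le> card I"
  unfolding trace_mult_def by (rule card_mono) auto

lemma sum_trace_mult:
  assumes "finite I" "finite A"
  shows "(\<Sum>T\<in>Pow A. trace_mult D I A T) = card I"
  unfolding trace_mult_def card_eq_sum
  by (rule sum.group) (use assms in auto)

lemma shatters_level_set:
  assumes "finite I" "linear_shatter D I P r" "A \<subseteq> P" "1 \<le> l" "B \<subseteq> A"
    and "shatters {T \<in> Pow A. l \<le> trace_mult D I A T} B"
  shows "card B \<le> r"
proof (rule card_le_if_traces_shattered[OF assms(1,2)])
  show "B \<subseteq> P" using assms(3,5) by blast
  show "Pow B \<subseteq> traces D I B"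
  proof
    fix C assume "C \<in> Pow B"
    then obtain T where T: "l \<le> trace_mult D I A T" "C = T \<inter> B"
      using assms(6) unfolding shatters_def by blast
    then have "0 < card {x \<in> I. D x \<inter> A = T}"
      using assms(4) by (simp add: trace_mult_def)
    then obtain x where "x \<in> I" "D x \<inter> A = T"
      by (auto simp: card_gt_0_iff)
    then have "C = D x \<inter> B" using T(2) assms(5) by blast
    then show "C \<in> traces D I B"
      using \<open>x \<in> I\<close> by (simp add: traces_def)
  qed
qed

lemma sum_edge_weight_le:
  assumes "finite I" "finite P" "linear_shatter D I P r" "A \<subseteq> P"
  shows "(\<Sum>e\<in>one_inclusion_edges (Pow A). edge_weight D I A e) \<le> r * card I"
proof -
  define M where "M = card I"
  define level where "level l = {T \<in> Pow A. l \<le> trace_mult D I A T}" for l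
  have fin_A: "finite A" using assms(2,4) finite_subset by blast
  have "(\<Sum>e\<in>one_inclusion_edges (Pow A). edge_weight D I A e)
      = (\<Sum>l\<in>{1..M}. card {e \<in> one_inclusion_edges (Pow A). l \<le> edge_weight D I A e})"
  proof (rule sum_eq_sum_card_levels)
    show "finite (one_inclusion_edges (Pow A))"
      using fin_A by (rule finite_one_inclusion_edges) simp
    show "\<forall>e\<in>one_inclusion_edges (Pow A). edge_weight D I A e \<le> M"
      by (simp add: edge_weight_def M_def min_le_iff_disj trace_mult_le[OF assms(1)])
  qed
  also have "\<dots> = (\<Sum>l\<in>{1..M}. card (one_inclusion_edges (level l)))"
    by (rule sum.cong[OF refl], rule arg_cong[where f = card])
      (auto simp: one_inclusion_edges_def level_def edge_weight_def)
  also have "\<dots> \<le> (\<Sum>l\<in>{1..M}. r * card (level l))"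
  proof (rule sum_mono)
    fix l assume "l \<in> {1..M}"
    then show "card (one_inclusion_edges (level l)) \<le> r * card (level l)"
      using shatters_level_set[OF assms(1,3,4)] fin_A
      by (intro card_one_inclusion_edges_le[of A]) (auto simp: level_def)
  qed
  also have "\<dots> = r * (\<Sum>T\<in>Pow A. trace_mult D I A T)"
    using fin_A assms(1) trace_mult_le
    by (subst sum_eq_sum_card_levels[where M = M]) (auto simp: level_def sum_distrib_left M_def)
  also have "\<dots> = r * card I"
    using fin_A assms(1) by (simp add: sum_trace_mult)
  finally show ?thesis .
qed

lemma separated_trace_class:
  assumes "separated D I P \<delta>"
  shows "separated D {x \<in> I. D x \<inter> A = T} (P - A) \<delta>"
  unfolding separated_def
proof (intro ballI impI)
  fix x y assume x: "x \<in> {x \<in> I. D x \<inter> A = T}" and y: "y \<in> {x \<in> I. D x \<inter> A = T}" and "x \<noteq> y"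
  then have "sym_diff (D x) (D y) \<inter> (P - A) = sym_diff (D x) (D y) \<inter> P" by blast
  then show "\<delta> \<le> card (sym_diff (D x) (D y) \<inter> (P - A))"
    using assms x y \<open>x \<noteq> y\<close> by (simp add: separated_def)
qed

lemma edge_weight_insert_eq:
  assumes "T \<subseteq> A" "p \<notin> A"
  shows "edge_weight D I (insert p A) (T, p)
    = min (card {x \<in> {x \<in> I. D x \<inter> A = T}. p \<notin> D x}) (card {x \<in> {x \<in> I. D x \<inter> A = T}. p \<in> D x})"
proof -
  have "{x \<in> I. D x \<inter> insert p A = T} = {x \<in> {x \<in> I. D x \<inter> A = T}. p \<notin> D x}"
    "{x \<in> I. D x \<inter> insert p A = insert p T} = {x \<in> {x \<in> I. D x \<inter> A = T}. p \<in> D x}"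
    using assms by auto
  then show ?thesis by (simp add: edge_weight_def trace_mult_def)
qed

lemma card_minus_card_traces_le:
  assumes "finite I" "finite A"
  shows "card I - card (traces D I A) \<le> (\<Sum>T\<in>Pow A. card {x \<in> I. D x \<inter> A = T} - 1)"
proof -
  let ?K = "\<lambda>T. {x \<in> I. D x \<inter> A = T}"
  have fin: "finite (traces D I A)" and sub: "traces D I A \<subseteq> Pow A"
    using assms(1) by (auto simp: traces_def)
  have "card I = (\<Sum>T\<in>traces D I A. card (?K T))"
    unfolding card_eq_sum[of I] card_eq_sum[of "?K _"]
    by (rule sum.group[symmetric]) (use assms(1) fin in \<open>auto simp: traces_def\<close>)
  also have "\<dots> = (\<Sum>T\<in>traces D I A. (card (?K T) - 1) + 1)"
  proof (rule sum.cong[OF refl])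
    fix T assume "T \<in> traces D I A"
    then have "?K T \<noteq> {}" by (auto simp: traces_def)
    then show "card (?K T) = card (?K T) - 1 + 1"
      using assms(1) by (simp add: card_gt_0_iff)
  qed
  also have "\<dots> = (\<Sum>T\<in>traces D I A. card (?K T) - 1) + card (traces D I A)"
    unfolding sum.distrib by simp
  finally have "card I - card (traces D I A) = (\<Sum>T\<in>traces D I A. card (?K T) - 1)"
    by simp
  also have "\<dots> \<le> (\<Sum>T\<in>Pow A. card (?K T) - 1)"
    using assms(2) sub by (intro sum_mono2) auto
  finally show ?thesis .
qed

lemma card_traces_deficit_le:
  assumes "finite I" "finite P" "A \<subseteq> P" "separated D I P \<delta>"
  shows "(card I - card (traces D I A)) * \<delta>
    \<le> 2 * (\<Sum>T\<in>Pow A. \<Sum>p\<in>P - A. edge_weight D I (insert p A) (T, p))"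
proof -
  let ?K = "\<lambda>T. {x \<in> I. D x \<inter> A = T}"
  have fin_A: "finite A" using assms(2,3) finite_subset by blast
  have class_bound: "(card (?K T) - 1) * \<delta> \<le> 2 * (\<Sum>p\<in>P - A. edge_weight D I (insert p A) (T, p))"
    if "T \<subseteq> A" for T
  proof -
    have "(card (?K T) - 1) * \<delta>
        \<le> 2 * (\<Sum>p\<in>P - A. min (card {x \<in> ?K T. p \<notin> D x}) (card {x \<in> ?K T. p \<in> D x}))"
      using assms(1,2) separated_trace_class[OF assms(4)] by (intro separated_card_le_sum_min) simp_all
    also have "\<dots> = 2 * (\<Sum>p\<in>P - A. edge_weight D I (insert p A) (T, p))"
      using that by (simp add: edge_weight_insert_eq)
    finally show ?thesis .
  qed
  have "(card I - card (traces D I A)) * \<delta> \<le> (\<Sum>T\<in>Pow A. card (?K T) - 1) * \<delta>"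
    using card_minus_card_traces_le[OF assms(1) fin_A] by (rule mult_le_mono1)
  also have "\<dots> = (\<Sum>T\<in>Pow A. (card (?K T) - 1) * \<delta>)"
    by (rule sum_distrib_right)
  also have "\<dots> \<le> (\<Sum>T\<in>Pow A. 2 * (\<Sum>p\<in>P - A. edge_weight D I (insert p A) (T, p)))"
    using class_bound by (intro sum_mono) simp
  finally show ?thesis
    by (simp add: sum_distrib_left)
qed

lemma bij_betw_insert_one_inclusion_edges:
  assumes "finite P"
  shows "bij_betw (\<lambda>(A, T, p). (insert p A, T, p))
    (SIGMA A:{A. A \<subseteq> P \<and> card A = j}. Pow A \<times> (P - A))
    (SIGMA A':{A'. A' \<subseteq> P \<and> card A' = Suc j}. one_inclusion_edges (Pow A'))"
proof (rule bij_betw_byWitness[where f' = "\<lambda>(A', T, p). (A' - {p}, T, p)"])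
  have fin: "finite A" if "A \<subseteq> P" for A
    using that assms by (rule finite_subset)
  show "\<forall>u\<in>SIGMA A:{A. A \<subseteq> P \<and> card A = j}. Pow A \<times> (P - A).
      (\<lambda>(A', T, p). (A' - {p}, T, p)) ((\<lambda>(A, T, p). (insert p A, T, p)) u) = u"
    by auto
  show "\<forall>u\<in>SIGMA A':{A'. A' \<subseteq> P \<and> card A' = Suc j}. one_inclusion_edges (Pow A').
      (\<lambda>(A, T, p). (insert p A, T, p)) ((\<lambda>(A', T, p). (A' - {p}, T, p)) u) = u"
    by (auto simp: one_inclusion_edges_def insert_absorb)
  show "(\<lambda>(A, T, p). (insert p A, T, p)) ` (SIGMA A:{A. A \<subseteq> P \<and> card A = j}. Pow A \<times> (P - A))
      \<subseteq> (SIGMA A':{A'. A' \<subseteq> P \<and> card A' = Suc j}. one_inclusion_edges (Pow A'))"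
    using fin by (auto simp: one_inclusion_edges_def)
  show "(\<lambda>(A', T, p). (A' - {p}, T, p)) ` (SIGMA A':{A'. A' \<subseteq> P \<and> card A' = Suc j}. one_inclusion_edges (Pow A'))
      \<subseteq> (SIGMA A:{A. A \<subseteq> P \<and> card A = j}. Pow A \<times> (P - A))"
    using fin by (auto simp: one_inclusion_edges_def)
qed

lemma sum_subsets_one_inclusion_edges:
  assumes "finite P"
  shows "(\<Sum>A'\<in>{A'. A' \<subseteq> P \<and> card A' = Suc j}. \<Sum>e\<in>one_inclusion_edges (Pow A'). G A' e)
    = (\<Sum>A\<in>{A. A \<subseteq> P \<and> card A = j}. \<Sum>T\<in>Pow A. \<Sum>p\<in>P - A. G (insert p A) (T, p))"
proof -
  let ?S = "\<lambda>j. {A. A \<subseteq> P \<and> card A = j}"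
  have fin_S: "finite (?S j)" for j
    by (rule finite_subset[of _ "Pow P"]) (use assms in auto)
  have fin_subset: "finite A" if "A \<in> ?S j" for A j
    using that by (simp add: finite_subset[OF _ assms])
  have "(\<Sum>A'\<in>?S (Suc j). \<Sum>e\<in>one_inclusion_edges (Pow A'). G A' e)
      = (\<Sum>(A', e)\<in>(SIGMA A':?S (Suc j). one_inclusion_edges (Pow A')). G A' e)"
  proof (rule sum.Sigma[OF fin_S], rule ballI)
    fix A' assume "A' \<in> ?S (Suc j)"
    then show "finite (one_inclusion_edges (Pow A'))"
      by (rule finite_one_inclusion_edges[OF fin_subset]) simp
  qed
  also have "\<dots> = (\<Sum>(A, T, p)\<in>(SIGMA A:?S j. Pow A \<times> (P - A)). G (insert p A) (T, p))"
    using sum.reindex_bij_betw[OF bij_betw_insert_one_inclusion_edges[OF assms], of "\<lambda>(A', e). G A' e"]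
    by (simp add: split_def)
  also have "\<dots> = (\<Sum>A\<in>?S j. \<Sum>(T, p)\<in>Pow A \<times> (P - A). G (insert p A) (T, p))"
  proof (rule sum.Sigma[symmetric, OF fin_S], rule ballI)
    fix A assume "A \<in> ?S j"
    then show "finite (Pow A \<times> (P - A))"
      using fin_subset[of A j] assms by simp
  qed
  also have "\<dots> = (\<Sum>A\<in>?S j. \<Sum>T\<in>Pow A. \<Sum>p\<in>P - A. G (insert p A) (T, p))"
    by (simp add: sum.cartesian_product)
  finally show ?thesis .
qed

lemma sum_card_traces_deficit_le:
  assumes "finite I" "finite P" "linear_shatter D I P r" "separated D I P \<delta>"
  shows "(\<Sum>A\<in>{A. A \<subseteq> P \<and> card A = j}. (card I - card (traces D I A)) * \<delta>)
    \<le> 2 * ((card P choose Suc j) * (r * card I))"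
proof -
  let ?S = "\<lambda>j. {A. A \<subseteq> P \<and> card A = j}"
  have "(\<Sum>A\<in>?S j. (card I - card (traces D I A)) * \<delta>)
      \<le> (\<Sum>A\<in>?S j. 2 * (\<Sum>T\<in>Pow A. \<Sum>p\<in>P - A. edge_weight D I (insert p A) (T, p)))"
    using card_traces_deficit_le[OF assms(1,2) _ assms(4)] by (intro sum_mono) simp
  also have "\<dots> = 2 * (\<Sum>A'\<in>?S (Suc j). \<Sum>e\<in>one_inclusion_edges (Pow A'). edge_weight D I A' e)"
    by (simp add: sum_distrib_left sum_subsets_one_inclusion_edges[OF assms(2)])
  also have "\<dots> \<le> 2 * (\<Sum>A'\<in>?S (Suc j). r * card I)"
    using sum_edge_weight_le[OF assms(1,2,3)] by (intro mult_le_mono2 sum_mono) simp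
  also have "\<dots> = 2 * ((card P choose Suc j) * (r * card I))"
    using n_subsets[OF assms(2)] by simp
  finally show ?thesis .
qed

lemma packing_inequality:
  assumes "finite I" "finite P" "linear_shatter D I P r" "separated D I P \<delta>" "j \<le> card P"
  shows "Suc j * ((card I - (r * j + 1)) * \<delta>) \<le> 2 * r * card I * card P"
proof -
  define N L where "N = card P" and "L = (card I - (r * j + 1)) * \<delta>"
  have "(N choose j) * L = (\<Sum>A\<in>{A. A \<subseteq> P \<and> card A = j}. L)"
    using n_subsets[OF assms(2)] by (simp add: N_def)
  also have "\<dots> \<le> (\<Sum>A\<in>{A. A \<subseteq> P \<and> card A = j}. (card I - card (traces D I A)) * \<delta>)"
  proof (rule sum_mono)
    fix A assume "A \<in> {A. A \<subseteq> P \<and> card A = j}"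
    then have "card (traces D I A) \<le> r * j + 1"
      using card_traces_le[OF assms(3)] by auto
    then show "L \<le> (card I - card (traces D I A)) * \<delta>"
      unfolding L_def by (intro mult_le_mono1 diff_le_mono2)
  qed
  also have "\<dots> \<le> 2 * ((N choose Suc j) * (r * card I))"
    unfolding N_def by (rule sum_card_traces_deficit_le[OF assms(1-4)])
  finally have "Suc j * ((N choose j) * L) \<le> Suc j * (2 * ((N choose Suc j) * (r * card I)))"
    by (rule mult_le_mono2)
  also have "\<dots> = 2 * (r * card I) * (Suc j * (N choose Suc j))"
    by (simp only: ac_simps)
  also have "\<dots> \<le> 2 * (r * card I) * (N * (N choose j))"
    using binomial_absorb_comp[of N j] binomial_absorption[of j N]
    by (intro mult_le_mono2) (metis diff_le_self mult_le_mono1)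
  finally have "(N choose j) * (Suc j * L) \<le> (N choose j) * (2 * r * card I * N)"
    by (simp only: ac_simps)
  moreover have "0 < N choose j"
    using assms(5) by (simp add: N_def)
  ultimately show ?thesis
    by (simp add: L_def N_def)
qed

lemma two_mult_le_of_packing_bound:
  fixes r E N j L M :: nat
  assumes "0 < r" "0 < E" "N \<le> Suc j * E" "Suc j * (L * (4 * r * E)) \<le> 2 * r * M * N"
  shows "2 * L \<le> M"
proof (cases "N = 0")
  case True
  then show ?thesis
    using assms(1,2,4) by simp
next
  case False
  have "4 * r * N * L \<le> 4 * r * (Suc j * E) * L"
    using assms(3) by (intro mult_le_mono1 mult_le_mono2)
  also have "\<dots> = Suc j * (L * (4 * r * E))"
    by (simp only: ac_simps)
  finally have "4 * r * N * L \<le> 2 * r * M * N"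
    using assms(4) by (rule order_trans)
  moreover have "4 * r * N * L = (2 * r * N) * (2 * L)" "2 * r * M * N = (2 * r * N) * M"
    by simp_all
  ultimately have "(2 * r * N) * (2 * L) \<le> (2 * r * N) * M"
    by simp
  then show ?thesis
    using False assms(1) by simp
qed

theorem separated_card_le_four:
  assumes "finite I" "finite P" "linear_shatter D I P r" "1 \<le> r" "1 \<le> c"
    and "card P \<le> c * card I" "separated D I P (16 * r * r * c)"
  shows "card I \<le> 4"
proof -
  define N M E where "N = card P" and "M = card I" and "E = 4 * r * c"
  define j L where "j = N div E" and "L = M - (r * j + 1)"
  have "0 < E" using assms(4,5) by (simp add: E_def)
  have jE: "j * E \<le> N" and NjE: "N \<le> Suc j * E"
    using \<open>0 < E\<close> unfolding j_def
    by (simp_all add: div_times_less_eq_dividend) (metis dividend_less_times_div less_imp_le_nat mult.commute)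
  have "j \<le> N"
    unfolding j_def by (rule div_le_dividend)
  then have "Suc j * (L * (16 * r * r * c)) \<le> 2 * r * M * N"
    using packing_inequality[OF assms(1,2,3,7), of j] unfolding L_def M_def N_def by blast
  moreover have "16 * r * r * c = 4 * r * E"
    by (simp add: E_def)
  ultimately have "Suc j * (L * (4 * r * E)) \<le> 2 * r * M * N"
    by simp
  with \<open>0 < E\<close> NjE have half: "2 * L \<le> M"
    using assms(4) by (intro two_mult_le_of_packing_bound) simp_all
  have "c * (4 * (r * j)) = j * E"
    by (simp add: E_def)
  also have "\<dots> \<le> c * M"
    using jE assms(6) by (simp add: M_def N_def)
  finally have "4 * (r * j) \<le> M"
    using assms(5) by simp
  with half show ?thesis
    unfolding M_def L_def by linarith
qed

section \<open>Independent sets in degenerate graphs\<close>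

lemma card_doubleton_le: "card {x, y} \<le> 2"
  by (cases "x = y") simp_all

lemma card_ordered_pairs_le:
  assumes "finite A"
  shows "card (SIGMA x:A. {y \<in> A. adj x y}) \<le> 2 * card {{x, y} |x y. x \<in> A \<and> y \<in> A \<and> adj x y}"
proof -
  let ?OP = "SIGMA x:A. {y \<in> A. adj x y}" and ?Edges = "{{x, y} |x y. x \<in> A \<and> y \<in> A \<and> adj x y}"
  have fin_OP: "finite ?OP" using assms by simp
  have fin_Edges: "finite ?Edges"
  proof (rule finite_subset)
    show "?Edges \<subseteq> (\<lambda>(x, y). {x, y}) ` (A \<times> A)" by auto
  qed (use assms in simp)
  have "card ?OP = (\<Sum>e\<in>?Edges. card {z \<in> ?OP. {fst z, snd z} = e})"
  proof (unfold card_eq_sum, rule sum.group[symmetric, OF fin_OP fin_Edges], rule image_subsetI)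
    fix z assume "z \<in> ?OP"
    then show "{fst z, snd z} \<in> ?Edges"
      by (intro CollectI exI[of _ "fst z"] exI[of _ "snd z"]) auto
  qed
  also have "\<dots> \<le> (\<Sum>e\<in>?Edges. 2)"
  proof (rule sum_mono)
    fix e assume "e \<in> ?Edges"
    then obtain a b where "e = {a, b}" by blast
    then have "{z \<in> ?OP. {fst z, snd z} = e} \<subseteq> {(a, b), (b, a)}"
      by (auto simp: doubleton_eq_iff)
    then have "card {z \<in> ?OP. {fst z, snd z} = e} \<le> card {(a, b), (b, a)}"
      by (rule card_mono[rotated]) simp
    also have "\<dots> \<le> 2"
      by (rule card_doubleton_le)
    finally show "card {z \<in> ?OP. {fst z, snd z} = e} \<le> 2" .
  qed
  finally show ?thesis by simp
qed

lemma exists_low_degree: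
  assumes "finite A" "A \<noteq> {}" "card {{x, y} |x y. x \<in> A \<and> y \<in> A \<and> adj x y} \<le> r * card A"
  shows "\<exists>x\<in>A. card {y \<in> A. adj x y} \<le> 2 * r"
proof (rule ccontr)
  assume "\<not> (\<exists>x\<in>A. card {y \<in> A. adj x y} \<le> 2 * r)"
  then have "(\<Sum>x\<in>A. Suc (2 * r)) \<le> (\<Sum>x\<in>A. card {y \<in> A. adj x y})"
    by (intro sum_mono) (simp add: not_le Suc_leI)
  also have "\<dots> = card (SIGMA x:A. {y \<in> A. adj x y})"
    using assms(1) by simp
  also have "\<dots> \<le> 2 * (r * card A)"
    using card_ordered_pairs_le[OF assms(1), of adj] assms(3) by linarith
  finally have "Suc (2 * r) * card A \<le> 2 * r * card A"
    by simp
  then show False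
    using assms(1,2) by (simp add: card_gt_0_iff)
qed

lemma exists_large_independent_set:
  assumes "finite R" "\<And>x y. adj x y \<Longrightarrow> adj y x" "\<And>x. \<not> adj x x"
    and "\<And>A. A \<subseteq> R \<Longrightarrow> A \<noteq> {} \<Longrightarrow> \<exists>x\<in>A. card {y \<in> A. adj x y} \<le> d"
  shows "\<exists>I\<subseteq>R. (\<forall>x\<in>I. \<forall>y\<in>I. \<not> adj x y) \<and> card R \<le> Suc d * card I"
  using assms(1,4)
proof (induction R rule: finite_psubset_induct)
  case (psubset R)
  show ?case
  proof (cases "R = {}")
    case False
    then obtain x where x: "x \<in> R" "card {y \<in> R. adj x y} \<le> d"
      using psubset.prems[of R] by blast
    define R' where "R' = R - insert x {y \<in> R. adj x y}"
    have "R' \<subset> R" using x(1) by (auto simp: R'_def)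
    then obtain I' where I': "I' \<subseteq> R'" "\<forall>u\<in>I'. \<forall>v\<in>I'. \<not> adj u v" "card R' \<le> Suc d * card I'"
      using psubset.IH[of R'] psubset.prems by (metis psubset_imp_subset subset_trans)
    have "x \<notin> I'" "finite I'"
      using I'(1) psubset.hyps finite_subset by (auto simp: R'_def)
    have "insert x I' \<subseteq> R"
      using I'(1) x(1) by (auto simp: R'_def)
    moreover have "\<forall>u\<in>insert x I'. \<forall>v\<in>insert x I'. \<not> adj u v"
      using I'(1,2) assms(2,3) by (auto simp: R'_def)
    moreover have "card R \<le> Suc d * card (insert x I')"
    proof -
      have "R \<subseteq> R' \<union> insert x {y \<in> R. adj x y}" by (auto simp: R'_def)
      moreover have "finite (R' \<union> insert x {y \<in> R. adj x y})"
        using psubset.hyps by (simp add: R'_def)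
      ultimately have "card R \<le> card (R' \<union> insert x {y \<in> R. adj x y})"
        by (rule card_mono[rotated])
      also have "\<dots> \<le> card R' + card (insert x {y \<in> R. adj x y})"
        by (rule card_Un_le)
      also have "card (insert x {y \<in> R. adj x y}) \<le> Suc d"
        using x(2) psubset.hyps by (simp add: card_insert_if)
      finally show ?thesis
        using I'(3) \<open>x \<notin> I'\<close> \<open>finite I'\<close> by simp
    qed
    ultimately show ?thesis by blast
  qed simp
qed

section \<open>The peeling set\<close>

definition trace_edge :: "('a \<Rightarrow> 'b set) \<Rightarrow> 'a set \<Rightarrow> 'b set \<Rightarrow> 'b \<Rightarrow> 'b \<Rightarrow> bool" where
  "trace_edge D U Z x y \<longleftrightarrow> x \<noteq> y \<and> (\<exists>v\<in>U. D v \<inter> Z = {x, y})"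

lemma trace_edge_cong:
  assumes "(\<lambda>v. D v \<inter> Z) ` U = (\<lambda>v. D v \<inter> Z) ` U'"
  shows "trace_edge D U Z = trace_edge D U' Z"
proof -
  have "(\<exists>v\<in>U. D v \<inter> Z = S) \<longleftrightarrow> (\<exists>v\<in>U'. D v \<inter> Z = S)" for S
    using assms by (metis (no_types, lifting) image_iff)
  then show ?thesis
    by (simp add: fun_eq_iff trace_edge_def)
qed

lemma exists_trace_edge_independent_set:
  assumes "finite U" "finite R" "R \<subseteq> Z" "linear_shatter D U Z r"
  shows "\<exists>I\<subseteq>R. (\<forall>x\<in>I. \<forall>y\<in>I. \<not> trace_edge D U Z x y) \<and> card R \<le> Suc (2 * r) * card I"
proof (rule exists_large_independent_set[OF assms(2)])
  show "trace_edge D U Z y x" if "trace_edge D U Z x y" for x y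
    using that by (auto simp: trace_edge_def insert_commute)
  show "\<not> trace_edge D U Z x x" for x
    by (simp add: trace_edge_def)
  fix A assume A: "A \<subseteq> R" "A \<noteq> {}"
  have "{{x, y} |x y. x \<in> A \<and> y \<in> A \<and> trace_edge D U Z x y} \<subseteq> traces D U A"
  proof
    fix e assume "e \<in> {{x, y} |x y. x \<in> A \<and> y \<in> A \<and> trace_edge D U Z x y}"
    then obtain x y v where "e = {x, y}" "x \<in> A" "y \<in> A" "v \<in> U" "D v \<inter> Z = {x, y}"
      by (auto simp: trace_edge_def)
    then have "e = D v \<inter> A" using A(1) assms(3) by blast
    then show "e \<in> traces D U A" using \<open>v \<in> U\<close> by (simp add: traces_def)
  qed
  then have "card {{x, y} |x y. x \<in> A \<and> y \<in> A \<and> trace_edge D U Z x y} \<le> card (traces D U A)"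
    using assms(1) by (intro card_mono) (simp_all add: traces_def)
  also have "\<dots> \<le> r * card A"
    using assms(3,4) A by (simp add: linear_shatter_def)
  finally show "\<exists>x\<in>A. card {y \<in> A. trace_edge D U Z x y} \<le> 2 * r"
    using A assms(2) finite_subset by (intro exists_low_degree) auto
qed

lemma odd_card_Int_doubleton_iff:
  assumes "x \<noteq> y"
  shows "odd (card (S \<inter> {x, y})) \<longleftrightarrow> (x \<in> S) \<noteq> (y \<in> S)"
  using assms by (cases "x \<in> S"; cases "y \<in> S") (simp_all add: Int_insert_right)

lemma odd_card_Int_if_not_trace_edge:
  assumes "x \<in> Z" "y \<in> Z" "x \<noteq> y" "\<not> trace_edge D U Z x y"
    and "v \<in> U" "D v \<inter> Z \<subseteq> {x, y}" "D v \<inter> Z \<noteq> {}"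
  shows "odd (card (D v \<inter> {x, y}))"
proof -
  have eq: "D v \<inter> {x, y} = D v \<inter> Z"
    using assms(1,2,6) by blast
  have "D v \<inter> Z \<noteq> {x, y}"
    using assms(3,4,5) by (auto simp: trace_edge_def)
  then have "(x \<in> D v) \<noteq> (y \<in> D v)"
    using assms(7) unfolding eq[symmetric] by (cases "x \<in> D v") blast+
  then show ?thesis
    using assms(3) by (simp add: odd_card_Int_doubleton_iff)
qed

lemma nbhd_subset: "nbhd V E v \<subseteq> V"
  by (auto simp: nbhd_def)

lemma nbhd_sym:
  assumes "simple_graph V E"
  shows "u \<in> nbhd V E v \<longleftrightarrow> v \<in> nbhd V E u"
  using assms by (auto simp: simple_graph_def nbhd_def)

lemma inj_on_traces_representatives:
  assumes "simple_graph V E" "inj_on (\<lambda>v. nbhd V E v \<inter> Z) U"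
    and "(\<lambda>x. nbhd V E x \<inter> U) ` Z \<subseteq> (\<lambda>x. nbhd V E x \<inter> U) ` R"
  shows "inj_on (\<lambda>v. nbhd V E v \<inter> R) U"
proof (rule inj_onI)
  let ?N = "nbhd V E"
  fix v v' assume v: "v \<in> U" "v' \<in> U" and eq: "?N v \<inter> R = ?N v' \<inter> R"
  have "z \<in> ?N v \<longleftrightarrow> z \<in> ?N v'" if "z \<in> Z" for z
  proof -
    have "?N z \<inter> U \<in> (\<lambda>x. ?N x \<inter> U) ` R"
      using assms(3) \<open>z \<in> Z\<close> by (rule subsetD[OF _ imageI])
    then obtain x where x: "x \<in> R" "?N z \<inter> U = ?N x \<inter> U"
      by (rule imageE)
    have "z \<in> ?N w \<longleftrightarrow> x \<in> ?N w" if "w \<in> U" for w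
    proof -
      have "z \<in> ?N w \<longleftrightarrow> w \<in> ?N z \<inter> U"
        using nbhd_sym[OF assms(1), of z w] that by simp
      also have "\<dots> \<longleftrightarrow> w \<in> ?N x \<inter> U"
        by (simp only: x(2))
      also have "\<dots> \<longleftrightarrow> x \<in> ?N w"
        using nbhd_sym[OF assms(1), of x w] that by simp
      finally show ?thesis .
    qed
    moreover have "x \<in> ?N v \<longleftrightarrow> x \<in> ?N v'"
      using arg_cong[where f = "\<lambda>S. x \<in> S", OF eq] x(1) by simp
    ultimately show ?thesis
      using v by simp
  qed
  then have "?N v \<inter> Z = ?N v' \<inter> Z" by blast
  then show "v = v'"
    using inj_onD[OF assms(2) _ v] by simp
qed

lemma traces_odd_pair_subset:
  assumes "simple_graph V E" "x \<in> Z" "y \<in> Z" "x \<noteq> y"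
    and "(\<lambda>v. nbhd V E v \<inter> Z) ` U \<subseteq> (\<lambda>v. nbhd V E v \<inter> Z) ` U'"
  shows "traces (nbhd V E) {v \<in> U. odd (card (nbhd V E v \<inter> {x, y}))} Z
    \<subseteq> traces (nbhd V E) (sym_diff (nbhd V E x) (nbhd V E y) \<inter> U') Z"
proof
  let ?N = "nbhd V E"
  fix T assume "T \<in> traces ?N {v \<in> U. odd (card (?N v \<inter> {x, y}))} Z"
  then obtain v where v: "v \<in> U" "odd (card (?N v \<inter> {x, y}))" "T = ?N v \<inter> Z"
    by (auto simp: traces_def)
  then obtain v' where v': "v' \<in> U'" "?N v' \<inter> Z = ?N v \<inter> Z"
    using assms(5) by (metis (no_types, lifting) image_iff subsetD)
  then have "?N v' \<inter> {x, y} = ?N v \<inter> {x, y}"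
    using assms(2,3) by blast
  then have "odd (card (?N v' \<inter> {x, y}))"
    using v(2) by simp
  then have "(x \<in> ?N v') \<noteq> (y \<in> ?N v')"
    using odd_card_Int_doubleton_iff[OF assms(4)] by blast
  then have "v' \<in> sym_diff (?N x) (?N y) \<inter> U'"
    using v'(1) nbhd_sym[OF assms(1)] by blast
  then show "T \<in> traces ?N (sym_diff (?N x) (?N y) \<inter> U') Z"
    unfolding traces_def v(3) v'(2)[symmetric] by (rule imageI)
qed

lemma exists_independent_set_of_distinct_traces:
  assumes "simple_graph V E" "linear_shatter (nbhd V E) V V r"
    and "Z \<subseteq> V" "Z \<noteq> {}" "U \<subseteq> V" "inj_on (\<lambda>v. nbhd V E v \<inter> Z) U"
  obtains I where "I \<subseteq> Z" "\<forall>x\<in>I. \<forall>y\<in>I. \<not> trace_edge (nbhd V E) U Z x y"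
    "card U \<le> r * (2 * r + 1) * card I"
proof -
  let ?N = "nbhd V E"
  have fin_V: "finite V" using assms(1) by (simp add: simple_graph_def)
  then have fin: "finite U" "finite Z" using assms(3,5) finite_subset by auto
  obtain R where R: "R \<subseteq> Z" "(\<lambda>x. ?N x \<inter> U) ` Z = (\<lambda>x. ?N x \<inter> U) ` R"
    using subset_image_inj[THEN iffD1, OF subset_refl[of "(\<lambda>x. ?N x \<inter> U) ` Z"]] by blast
  have "R \<noteq> {}" using R(2) assms(4) by auto
  have "card U = card (traces ?N U R)"
    using inj_on_traces_representatives[OF assms(1,6)] R(2) by (simp add: traces_def card_image)
  also have "\<dots> \<le> r * card R"
    using linear_shatter_mono[OF assms(2) fin_V assms(5), of R] R(1) assms(3) \<open>R \<noteq> {}\<close>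
    by (simp add: linear_shatter_def)
  finally have card_U: "card U \<le> r * card R" .
  have "linear_shatter ?N U Z r"
    by (rule linear_shatter_mono[OF assms(2) fin_V assms(5,3)])
  moreover have "finite R"
    using R(1) fin(2) by (rule finite_subset)
  ultimately have "\<exists>I\<subseteq>R. (\<forall>x\<in>I. \<forall>y\<in>I. \<not> trace_edge ?N U Z x y) \<and> card R \<le> Suc (2 * r) * card I"
    using fin(1) R(1) by (intro exists_trace_edge_independent_set)
  then obtain I where I: "I \<subseteq> R" "\<forall>x\<in>I. \<forall>y\<in>I. \<not> trace_edge ?N U Z x y"
    "card R \<le> Suc (2 * r) * card I"
    by blast
  from card_U have "card U \<le> r * (Suc (2 * r) * card I)"
    using I(3) by (meson le_trans mult_le_mono2)
  then have "card U \<le> r * (2 * r + 1) * card I"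
    by (simp only: mult.assoc Suc_eq_plus1)
  moreover have "I \<subseteq> Z"
    using I(1) R(1) by (rule subset_trans)
  ultimately show ?thesis
    using I(2) that by blast
qed

(* The separation 16 r^2 c of separated_card_le_four for c = r (2r + 1), the factor by which
   representatives of distinct traces can outnumber an independent set of trace edges. *)
definition structure_bound :: "nat \<Rightarrow> nat" where
  "structure_bound r = 16 * r * r * (r * (2 * r + 1))"

lemma four_mult_le_structure_bound:
  assumes "1 \<le> r"
  shows "4 * (r * (2 * r + 1)) \<le> structure_bound r"
proof -
  have "4 \<le> 16 * r * r"
    using assms by (simp add: Suc_le_eq)
  then show ?thesis
    unfolding structure_bound_def by (rule mult_le_mono1)
qed

lemma exists_close_pair:
  assumes "finite I" "finite P" "linear_shatter D I P r" "1 \<le> r"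
    and "card P \<le> r * (2 * r + 1) * card I" "structure_bound r < card P"
  obtains x y where "x \<in> I" "y \<in> I" "x \<noteq> y" "card (sym_diff (D x) (D y) \<inter> P) < structure_bound r"
proof -
  have "\<not> separated D I P (structure_bound r)"
  proof
    assume "separated D I P (structure_bound r)"
    then have "card I \<le> 4"
      using separated_card_le_four[OF assms(1-4) _ assms(5)] assms(4) by (simp add: structure_bound_def)
    then have "card P \<le> 4 * (r * (2 * r + 1))"
      using assms(5) by (metis le_trans mult.commute mult_le_mono2)
    then show False
      using assms(6) four_mult_le_structure_bound[OF assms(4)] by linarith
  qed
  then show ?thesis
    using that by (auto simp: separated_def not_le)
qed

lemma exists_trace_edge_free_pair:
  assumes "simple_graph V E" "linear_shatter (nbhd V E) V V r" "1 \<le> r" "Z \<subseteq> V" "U \<subseteq> V"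
    and "structure_bound r < card (traces (nbhd V E) U Z)"
  obtains x y where "x \<in> Z" "y \<in> Z" "x \<noteq> y" "\<not> trace_edge (nbhd V E) U Z x y"
    "card (traces (nbhd V E) {v \<in> U. odd (card (nbhd V E v \<inter> {x, y}))} Z) \<le> structure_bound r"
proof -
  let ?N = "nbhd V E"
  have fin_V: "finite V" using assms(1) by (simp add: simple_graph_def)
  obtain U' where U': "U' \<subseteq> U" "inj_on (\<lambda>v. ?N v \<inter> Z) U'" "(\<lambda>v. ?N v \<inter> Z) ` U = (\<lambda>v. ?N v \<inter> Z) ` U'"
    using subset_image_inj[THEN iffD1, OF subset_refl[of "(\<lambda>v. ?N v \<inter> Z) ` U"]] by blast
  have U'_V: "U' \<subseteq> V"
    using U'(1) assms(5) by (rule subset_trans)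
  then have fin_U': "finite U'"
    using fin_V by (rule finite_subset)
  have card_U': "card U' = card (traces ?N U Z)"
    using U'(2,3) by (simp add: traces_def card_image)
  have "Z \<noteq> {}"
    using assms(3,6) card_traces_empty_le[of ?N U] four_mult_le_structure_bound[OF assms(3)] by auto
  then obtain I where I: "I \<subseteq> Z" "\<forall>x\<in>I. \<forall>y\<in>I. \<not> trace_edge ?N U' Z x y"
    "card U' \<le> r * (2 * r + 1) * card I"
    by (rule exists_independent_set_of_distinct_traces[OF assms(1,2,4) _ U'_V U'(2)])
  moreover have "finite I" "linear_shatter ?N I U' r"
    using I(1) assms(4) fin_V U'_V linear_shatter_mono[OF assms(2) fin_V] by (auto intro: finite_subset)
  ultimately obtain x y where xy: "x \<in> I" "y \<in> I" "x \<noteq> y"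
    and close: "card (sym_diff (?N x) (?N y) \<inter> U') < structure_bound r"
    using exists_close_pair[OF _ fin_U' _ assms(3)] assms(6) card_U' by metis
  have "card (traces ?N {v \<in> U. odd (card (?N v \<inter> {x, y}))} Z)
      \<le> card (traces ?N (sym_diff (?N x) (?N y) \<inter> U') Z)"
    using traces_odd_pair_subset[OF assms(1) _ _ xy(3), of Z U U'] xy(1,2) I(1) U'(3) fin_U'
    by (intro card_mono) (auto simp: traces_def)
  also have "\<dots> \<le> card (sym_diff (?N x) (?N y) \<inter> U')"
    using fin_U' by (simp add: traces_def card_image_le)
  finally have "card (traces ?N {v \<in> U. odd (card (?N v \<inter> {x, y}))} Z) \<le> structure_bound r"
    using close by linarith
  moreover have "\<not> trace_edge ?N U Z x y"
    using I(2) xy trace_edge_cong[OF U'(3)] by simp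
  moreover have "x \<in> Z" "y \<in> Z"
    using xy(1,2) I(1) by auto
  ultimately show ?thesis
    using xy(3) by (intro that)
qed

lemma exists_peeling_set:
  assumes "simple_graph V E" "linear_shatter (nbhd V E) V V r" "1 \<le> r" "Z \<subseteq> V" "U \<subseteq> V"
    and "U \<noteq> {}" "\<forall>v\<in>U. nbhd V E v \<inter> Z \<noteq> {}"
  obtains W where "W \<subseteq> Z" "W \<noteq> {}" "\<forall>v\<in>U. nbhd V E v \<inter> Z \<subseteq> W \<longrightarrow> odd (card (nbhd V E v \<inter> W))"
    "card (traces (nbhd V E) {v \<in> U. odd (card (nbhd V E v \<inter> W))} (Z - W)) \<le> structure_bound r"
proof -
  let ?N = "nbhd V E"
  let ?C = "\<lambda>W. {v \<in> U. odd (card (?N v \<inter> W))}"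
  have fin_U: "finite U"
    using assms(1,5) by (meson finite_subset simple_graph_def)
  then have traces_le: "card (traces ?N (?C W) (Z - W)) \<le> card (traces ?N U Z)" for W
    using card_traces_Diff_le[of "?C W" ?N Z W] card_traces_mono[OF fin_U, of "?C W" ?N Z] by simp
  show ?thesis
  proof (cases "card (traces ?N U Z) \<le> structure_bound r")
    case True
    obtain v0 x0 where "v0 \<in> U" "x0 \<in> ?N v0 \<inter> Z"
      using assms(6,7) by blast
    have all_x0: "\<forall>v\<in>U. ?N v \<inter> Z \<subseteq> {x0} \<longrightarrow> odd (card (?N v \<inter> {x0}))"
    proof (intro ballI impI)
      fix v assume "v \<in> U" "?N v \<inter> Z \<subseteq> {x0}"
      then have "?N v \<inter> {x0} = {x0}"
        using assms(7) by blast
      then show "odd (card (?N v \<inter> {x0}))" by simp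
    qed
    have card_x0: "card (traces ?N (?C {x0}) (Z - {x0})) \<le> structure_bound r"
      using traces_le[of "{x0}"] True by (rule le_trans)
    have sub_x0: "{x0} \<subseteq> Z"
      using \<open>x0 \<in> ?N v0 \<inter> Z\<close> by simp
    show ?thesis
      by (rule that[OF sub_x0 insert_not_empty all_x0 card_x0])
  next
    case False
    then have "structure_bound r < card (traces ?N U Z)"
      by simp
    then obtain x y where xy: "x \<in> Z" "y \<in> Z" "x \<noteq> y" "\<not> trace_edge ?N U Z x y"
      and bound: "card (traces ?N (?C {x, y}) Z) \<le> structure_bound r"
      by (rule exists_trace_edge_free_pair[OF assms(1-5)])
    have all_xy: "\<forall>v\<in>U. ?N v \<inter> Z \<subseteq> {x, y} \<longrightarrow> odd (card (?N v \<inter> {x, y}))"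
      using odd_card_Int_if_not_trace_edge[OF xy] assms(7) by blast
    have card_xy: "card (traces ?N (?C {x, y}) (Z - {x, y})) \<le> structure_bound r"
      using card_traces_Diff_le[of "?C {x, y}" ?N Z "{x, y}"] fin_U bound by simp
    have sub_xy: "{x, y} \<subseteq> Z"
      using xy(1,2) by simp
    show ?thesis
      by (rule that[OF sub_xy insert_not_empty all_xy card_xy])
  qed
qed

section \<open>Colouring by peeling\<close>

lemma inj_bit_set: "inj (\<lambda>a :: nat. {j. bit a j})"
  by (rule injI) (simp add: bit_eq_iff set_eq_iff)

lemma exists_bits_notin:
  assumes "finite F" "card F < 2 ^ t"
  obtains a :: nat where "a < 2 ^ t" "{j. bit a j} \<notin> F"
proof -
  have "\<not> (\<lambda>a :: nat. {j. bit a j}) ` {..<2 ^ t} \<subseteq> F"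
  proof
    assume "(\<lambda>a :: nat. {j. bit a j}) ` {..<2 ^ t} \<subseteq> F"
    then have "card ((\<lambda>a :: nat. {j. bit a j}) ` {..<2 ^ t}) \<le> card F"
      using assms(1) by (rule card_mono[rotated])
    then show False
      using assms(2) card_image[OF inj_on_subset[OF inj_bit_set subset_UNIV]] by simp
  qed
  then show ?thesis
    using that by blast
qed

lemma card_bits_override:
  assumes "finite S"
  shows "card {u \<in> S. bit (if u \<in> W then a else \<phi> u) j}
    = (if bit a j then card (S \<inter> W) else 0) + card {u \<in> S - W. bit (\<phi> u) j}"
proof -
  have "{u \<in> S. bit (if u \<in> W then a else \<phi> u) j} = {u \<in> S \<inter> W. bit a j} \<union> {u \<in> S - W. bit (\<phi> u) j}"
    by auto
  moreover have "card {u \<in> S \<inter> W. bit a j} = (if bit a j then card (S \<inter> W) else 0)"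
    by (simp add: Int_def)
  ultimately show ?thesis
    using assms by (simp add: card_Un_disjoint disjoint_iff)
qed

lemma odd_bit_count_override:
  assumes "finite Z" "W \<subseteq> Z"
    and "\<forall>v\<in>U. even (card (N v \<inter> W)) \<longrightarrow> (\<exists>j. odd (card {u \<in> N v \<inter> (Z - W). bit (\<phi> u) j}))"
    and "\<forall>v\<in>U. odd (card (N v \<inter> W)) \<longrightarrow> {j. bit a j} \<noteq> {j. odd (card {u \<in> N v \<inter> (Z - W). bit (\<phi> u) j})}"
  shows "\<forall>v\<in>U. \<exists>j. odd (card {u \<in> N v \<inter> Z. bit (if u \<in> W then a else \<phi> u) j})"
proof
  fix v assume "v \<in> U"
  have count: "card {u \<in> N v \<inter> Z. bit (if u \<in> W then a else \<phi> u) j}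
      = (if bit a j then card (N v \<inter> W) else 0) + card {u \<in> N v \<inter> (Z - W). bit (\<phi> u) j}" for j
  proof -
    have "N v \<inter> Z \<inter> W = N v \<inter> W" "N v \<inter> Z - W = N v \<inter> (Z - W)"
      using assms(2) by blast+
    then show ?thesis
      using card_bits_override[of "N v \<inter> Z" W a \<phi> j] assms(1) by simp
  qed
  show "\<exists>j. odd (card {u \<in> N v \<inter> Z. bit (if u \<in> W then a else \<phi> u) j})"
  proof (cases "even (card (N v \<inter> W))")
    case True
    then show ?thesis
      using assms(3) \<open>v \<in> U\<close> count by auto
  next
    case False
    then obtain j where "bit a j \<noteq> odd (card {u \<in> N v \<inter> (Z - W). bit (\<phi> u) j})"
      using assms(4) \<open>v \<in> U\<close> by blast
    then show ?thesis
      using False count by (intro exI[of _ j]) auto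
  qed
qed

lemma extend_bit_colouring:
  fixes N :: "'a \<Rightarrow> 'b set" and \<phi> :: "'b \<Rightarrow> nat"
  assumes "finite Z" "W \<subseteq> Z" "finite U"
    and "card (traces N {v \<in> U. odd (card (N v \<inter> W))} (Z - W)) < 2 ^ t"
    and "\<forall>v\<in>U. even (card (N v \<inter> W)) \<longrightarrow> (\<exists>j. odd (card {u \<in> N v \<inter> (Z - W). bit (\<phi> u) j}))"
  obtains a where "a < 2 ^ t"
    "\<forall>v\<in>U. \<exists>j. odd (card {u \<in> N v \<inter> Z. bit (if u \<in> W then a else \<phi> u) j})"
proof -
  let ?C = "{v \<in> U. odd (card (N v \<inter> W))}"
  define parity where "parity S = {j. odd (card {u \<in> S. bit (\<phi> u) j})}" for S
  have fin_traces: "finite (traces N ?C (Z - W))"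
    using assms(3) by (simp add: traces_def)
  then have "card (parity ` traces N ?C (Z - W)) < 2 ^ t"
    using card_image_le[OF fin_traces, of parity] assms(4) by linarith
  then obtain a :: nat where a: "a < 2 ^ t" "{j. bit a j} \<notin> parity ` traces N ?C (Z - W)"
    by (rule exists_bits_notin[OF finite_imageI[OF fin_traces]])
  have "\<forall>v\<in>U. odd (card (N v \<inter> W)) \<longrightarrow> {j. bit a j} \<noteq> {j. odd (card {u \<in> N v \<inter> (Z - W). bit (\<phi> u) j})}"
  proof (intro ballI impI)
    fix v assume "v \<in> U" "odd (card (N v \<inter> W))"
    then have "N v \<inter> (Z - W) \<in> traces N ?C (Z - W)"
      unfolding traces_def by (intro image_eqI[where x = v]) simp_all
    then have "parity (N v \<inter> (Z - W)) \<noteq> {j. bit a j}"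
      using a(2) image_eqI[of "{j. bit a j}" parity] by metis
    then show "{j. bit a j} \<noteq> {j. odd (card {u \<in> N v \<inter> (Z - W). bit (\<phi> u) j})}"
      unfolding parity_def by (rule not_sym)
  qed
  then show ?thesis
    using that[OF a(1)] odd_bit_count_override[OF assms(1,2,5)] by blast
qed

lemma exists_bit_colouring:
  assumes "simple_graph V E" "linear_shatter (nbhd V E) V V r" "1 \<le> r" "structure_bound r < 2 ^ t"
  shows "Z \<subseteq> V \<Longrightarrow> U \<subseteq> V \<Longrightarrow> \<forall>v\<in>U. nbhd V E v \<inter> Z \<noteq> {} \<Longrightarrow>
    \<exists>\<phi>. (\<forall>u. \<phi> u < (2::nat) ^ t) \<and> (\<forall>v\<in>U. \<exists>j. odd (card {u \<in> nbhd V E v \<inter> Z. bit (\<phi> u) j}))"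
proof (induction "card Z" arbitrary: Z U rule: less_induct)
  case less
  let ?N = "nbhd V E"
  have fin_V: "finite V" using assms(1) by (simp add: simple_graph_def)
  show ?case
  proof (cases "U = {}")
    case False
    obtain W where W: "W \<subseteq> Z" "W \<noteq> {}" "\<forall>v\<in>U. ?N v \<inter> Z \<subseteq> W \<longrightarrow> odd (card (?N v \<inter> W))"
      and few_traces: "card (traces ?N {v \<in> U. odd (card (?N v \<inter> W))} (Z - W)) \<le> structure_bound r"
      by (rule exists_peeling_set[OF assms(1-3) less.prems(1,2) False less.prems(3)])
    have fin_Z: "finite Z" using less.prems(1) fin_V by (rule finite_subset)
    have "Z - W \<subset> Z"
      using W(1,2) by blast
    then have "card (Z - W) < card Z"
      by (rule psubset_card_mono[OF fin_Z])
    moreover have "\<forall>v\<in>{v \<in> U. even (card (?N v \<inter> W))}. ?N v \<inter> (Z - W) \<noteq> {}"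
      using W(3) less.prems(3) by blast
    moreover have "Z - W \<subseteq> V" "{v \<in> U. even (card (?N v \<inter> W))} \<subseteq> V"
      using less.prems(1,2) by auto
    ultimately have "\<exists>\<phi>. (\<forall>u. \<phi> u < (2::nat) ^ t) \<and> (\<forall>v\<in>{v \<in> U. even (card (?N v \<inter> W))}.
        \<exists>j. odd (card {u \<in> ?N v \<inter> (Z - W). bit (\<phi> u) j}))"
      by (intro less.hyps)
    then obtain \<phi> :: "'a \<Rightarrow> nat" where \<phi>: "\<forall>u. \<phi> u < 2 ^ t"
      "\<forall>v\<in>{v \<in> U. even (card (?N v \<inter> W))}. \<exists>j. odd (card {u \<in> ?N v \<inter> (Z - W). bit (\<phi> u) j})"
      by blast
    have "finite U"
      using less.prems(2) fin_V by (rule finite_subset)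
    moreover have "card (traces ?N {v \<in> U. odd (card (?N v \<inter> W))} (Z - W)) < 2 ^ t"
      using few_traces assms(4) by linarith
    moreover have "\<forall>v\<in>U. even (card (?N v \<inter> W)) \<longrightarrow> (\<exists>j. odd (card {u \<in> ?N v \<inter> (Z - W). bit (\<phi> u) j}))"
      using \<phi>(2) by simp
    ultimately obtain a where a: "a < 2 ^ t"
      "\<forall>v\<in>U. \<exists>j. odd (card {u \<in> ?N v \<inter> Z. bit (if u \<in> W then a else \<phi> u) j})"
      by (rule extend_bit_colouring[OF fin_Z W(1)])
    have "\<forall>u. (if u \<in> W then a else \<phi> u) < 2 ^ t"
      using a(1) \<phi>(1) by simp
    then show ?thesis
      using a(2) by (intro exI[of _ "\<lambda>u. if u \<in> W then a else \<phi> u"]) simp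
  qed (auto intro: exI[of _ "\<lambda>_. 0"])
qed

lemma odd_colour_class_of_odd_bit:
  assumes "finite S" "\<forall>u\<in>S. c u < (k :: nat)" "odd (card {u \<in> S. bit (c u) j})"
  shows "\<exists>i<k. odd (card {u \<in> S. c u = i})"
proof (rule ccontr)
  assume "\<not> (\<exists>i<k. odd (card {u \<in> S. c u = i}))"
  then have "even (\<Sum>i\<in>{i \<in> {..<k}. bit i j}. card {u \<in> S. c u = i})"
    by (intro dvd_sum) auto
  moreover have "(\<Sum>i\<in>{i \<in> {..<k}. bit i j}. card {u \<in> S. c u = i}) = card {u \<in> S. bit (c u) j}"
  proof -
    have "{u \<in> S. bit (c u) j} = (\<Union>i\<in>{i \<in> {..<k}. bit i j}. {u \<in> S. c u = i})"
      using assms(2) by auto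
    also have "card \<dots> = (\<Sum>i\<in>{i \<in> {..<k}. bit i j}. card {u \<in> S. c u = i})"
      using assms(1) by (intro card_UN_disjoint) auto
    finally show ?thesis by simp
  qed
  ultimately show False
    using assms(3) by simp
qed

lemma linear_shatter_of_nbhd_complexity:
  assumes "simple_graph V E" "\<forall>m::nat. m > 0 \<longrightarrow> int (nbhd_complexity V E m) \<le> r * int m"
  shows "linear_shatter (nbhd V E) V V (max 1 (nat r))"
  unfolding linear_shatter_def
proof (intro allI impI)
  fix A assume A: "A \<subseteq> V" "A \<noteq> {}"
  have fin_V: "finite V" using assms(1) by (simp add: simple_graph_def)
  then have "0 < card A" using A by (meson card_gt_0_iff finite_subset)
  let ?S = "{card ((\<lambda>v. nbhd V E v \<inter> B) ` V) |B. B \<subseteq> V \<and> card B = card A}"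
  have "finite ?S"
    by (rule finite_image_set, rule finite_subset[of _ "Pow V"]) (use fin_V in auto)
  moreover have "card (traces (nbhd V E) V A) \<in> ?S"
    using A(1) by (auto simp: traces_def)
  ultimately have "card (traces (nbhd V E) V A) \<le> nbhd_complexity V E (card A)"
    unfolding nbhd_complexity_def by (rule le_cSup_finite)
  then have "int (card (traces (nbhd V E) V A)) \<le> r * int (card A)"
    using assms(2) \<open>0 < card A\<close> by (meson of_nat_le_iff order_trans)
  also have "\<dots> \<le> int (max 1 (nat r)) * int (card A)"
    by (intro mult_right_mono) auto
  finally show "card (traces (nbhd V E) V A) \<le> max 1 (nat r) * card A"
    by (simp only: of_nat_mult[symmetric] of_nat_le_iff)
qed

lemma exists_odd_colouring:
  assumes "simple_graph V E" "linear_shatter (nbhd V E) V V r" "1 \<le> r" "structure_bound r < 2 ^ t"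
  shows "\<exists>c. (\<forall>v\<in>V. c v < (2::nat) ^ t) \<and>
    (\<forall>v\<in>V. nbhd V E v \<noteq> {} \<longrightarrow> (\<exists>i<2 ^ t. odd (card {u \<in> nbhd V E v. c u = i})))"
proof -
  have nbhd_Int: "nbhd V E v \<inter> V = nbhd V E v" for v
    by (rule Int_absorb2[OF nbhd_subset])
  have "\<exists>c. (\<forall>u. c u < (2::nat) ^ t) \<and>
      (\<forall>v\<in>{v \<in> V. nbhd V E v \<noteq> {}}. \<exists>j. odd (card {u \<in> nbhd V E v \<inter> V. bit (c u) j}))"
    using assms by (intro exists_bit_colouring) (simp_all add: nbhd_Int)
  then obtain c :: "'a \<Rightarrow> nat" where c: "\<forall>u. c u < 2 ^ t"
    "\<forall>v\<in>{v \<in> V. nbhd V E v \<noteq> {}}. \<exists>j. odd (card {u \<in> nbhd V E v. bit (c u) j})"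
    unfolding nbhd_Int by blast
  have "\<exists>i<2 ^ t. odd (card {u \<in> nbhd V E v. c u = i})" if "v \<in> V" "nbhd V E v \<noteq> {}" for v
  proof -
    have "v \<in> {v \<in> V. nbhd V E v \<noteq> {}}"
      using that by simp
    then obtain j where j: "odd (card {u \<in> nbhd V E v. bit (c u) j})"
      using c(2) by blast
    have "finite V"
      using assms(1) by (simp add: simple_graph_def)
    then have "finite (nbhd V E v)"
      by (rule finite_subset[OF nbhd_subset])
    moreover have "\<forall>u\<in>nbhd V E v. c u < 2 ^ t"
      using c(1) by simp
    ultimately show ?thesis
      using j by (rule odd_colour_class_of_odd_bit)
  qed
  then show ?thesis
    using c(1) by blast
qed

theorem theorem1p2:
  shows "\<forall>r::int. \<exists>k::nat. \<forall>(V::nat set) E.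
    simple_graph V E \<and> (\<forall>m::nat. m > 0 \<longrightarrow> int (nbhd_complexity V E m) \<le> r * int m)
    \<longrightarrow> (\<exists>c::nat \<Rightarrow> nat. (\<forall>v\<in>V. c v < k) \<and>
          (\<forall>v\<in>V. nbhd V E v \<noteq> {} \<longrightarrow>
             (\<exists>i<k. odd (card {u \<in> nbhd V E v. c u = i}))))"
proof -
  have "\<exists>c::nat \<Rightarrow> nat. (\<forall>v\<in>V. c v < 2 ^ structure_bound (max 1 (nat r))) \<and>
      (\<forall>v\<in>V. nbhd V E v \<noteq> {} \<longrightarrow>
        (\<exists>i<2 ^ structure_bound (max 1 (nat r)). odd (card {u \<in> nbhd V E v. c u = i})))"
    if "simple_graph V E" "\<forall>m::nat. m > 0 \<longrightarrow> int (nbhd_complexity V E m) \<le> r * int m"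
    for r and V :: "nat set" and E
    by (rule exists_odd_colouring[OF that(1) linear_shatter_of_nbhd_complexity[OF that]])
      (simp_all add: less_exp)
  then show ?thesis by blast
qed

end
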